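(* Let $S$ be an inductive left $E$-monoid with left $E$-modal operation $\cdot$, and let $P(E,S)$ be the set $E\times S$ with multiplication $(e,s)*(f,t)=(e\wedge(s\cdot f),\,st)$ and unary operation $D((e,s))=(e,1)$. Then the map $\psi:P(E,S)\to Rest(E,S)$, $\psi((e,s))=(e,es)$, is a surjective semigroup homomorphism satisfying $\psi(D(x))=D(\psi(x))$ for all $x\in P(E,S)$, and $\psi$ is injective on $D(P(E,S))=\{(e,1)\mid e\in E\}$.
   Context: For a semigroup $S$, $E(S)$ is its set of idempotents; for $e,f\in E(S)$, $e\le_r f$ iff $e=ef$. $E\subseteq E(S)$ is right pre-reduced if $e=ef$ and $f=fe$ imply $e=f$ for $e,f\in E$. Let $S$ be a monoid and $1\in E\subseteq E(S)$. $S$ is an inductive left $E$-monoid if $E$ is right pre-reduced, $(E,\le_r)$ is a meet-semilattice with meet $\wedge$, and (I1') for all $t\in S$, $e\in E$ there is $t\cdot e\in E$ such that for all $s\in S$: $ste=st$ iff $s(t\cdot e)=s$ (the map $(t,e)\mapsto t\cdot e$, necessarily unique, is the left $E$-modal operation); (I2') for $s\in S$, $e,f\in E$: $se=sf=s$ implies $s(e\wedge f)=s$. $Rest(E,S)$ is the set $C_E(S)=\{(e,s)\in E\times S\mid es=s\}$ with multiplication $(e,s)(f,t)=(e\wedge(s\cdot f),(e\wedge(s\cdot f))st)$ and $D((e,s))=(e,e)$. *)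

theory Defs
  imports Main
begin

text \<open>The monoid S is modelled as a type of class monoid_mult; E is a subset.\<close>

definition leq_r :: "'a::monoid_mult \<Rightarrow> 'a \<Rightarrow> bool" where
  "leq_r e f \<longleftrightarrow> e = e * f"

definition idempotents :: "'a::monoid_mult set" where
  "idempotents = {e. e * e = e}"

definition right_pre_reduced :: "'a::monoid_mult set \<Rightarrow> bool" where
  "right_pre_reduced E \<longleftrightarrow> (\<forall>e\<in>E. \<forall>f\<in>E. e = e * f \<and> f = f * e \<longrightarrow> e = f)"

definition is_meet_on :: "'a::monoid_mult set \<Rightarrow> ('a \<Rightarrow> 'a \<Rightarrow> 'a) \<Rightarrow> bool" where
  "is_meet_on E mt \<longleftrightarrow> (\<forall>e\<in>E. \<forall>f\<in>E. mt e f \<in> E \<and> leq_r (mt e f) e \<and> leq_r (mt e f) f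
      \<and> (\<forall>g\<in>E. leq_r g e \<and> leq_r g f \<longrightarrow> leq_r g (mt e f)))"

definition inductive_left_E_monoid ::
    "'a::monoid_mult set \<Rightarrow> ('a \<Rightarrow> 'a \<Rightarrow> 'a) \<Rightarrow> ('a \<Rightarrow> 'a \<Rightarrow> 'a) \<Rightarrow> bool" where
  "inductive_left_E_monoid E mt dot \<longleftrightarrow>
     1 \<in> E \<and> E \<subseteq> idempotents \<and> right_pre_reduced E \<and> is_meet_on E mt \<and>
     (\<forall>t e. e \<in> E \<longrightarrow> dot t e \<in> E \<and> (\<forall>s. s * t * e = s * t \<longleftrightarrow> s * dot t e = s)) \<and>
     (\<forall>s e f. e \<in> E \<longrightarrow> f \<in> E \<longrightarrow> s * e = s \<longrightarrow> s * f = s \<longrightarrow> s * mt e f = s)"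

definition P_set :: "'a::monoid_mult set \<Rightarrow> ('a \<times> 'a) set" where
  "P_set E = E \<times> UNIV"

definition P_mult :: "('a::monoid_mult \<Rightarrow> 'a \<Rightarrow> 'a) \<Rightarrow> ('a \<Rightarrow> 'a \<Rightarrow> 'a)
    \<Rightarrow> 'a \<times> 'a \<Rightarrow> 'a \<times> 'a \<Rightarrow> 'a \<times> 'a" where
  "P_mult mt dot x y = (case x of (e, s) \<Rightarrow> case y of (f, t) \<Rightarrow> (mt e (dot s f), s * t))"

definition P_D :: "'a::monoid_mult \<times> 'a \<Rightarrow> 'a \<times> 'a" where
  "P_D x = (fst x, 1)"

definition Rest_set :: "'a::monoid_mult set \<Rightarrow> ('a \<times> 'a) set" where
  "Rest_set E = {(e, s). e \<in> E \<and> e * s = s}"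

definition Rest_mult :: "('a::monoid_mult \<Rightarrow> 'a \<Rightarrow> 'a) \<Rightarrow> ('a \<Rightarrow> 'a \<Rightarrow> 'a)
    \<Rightarrow> 'a \<times> 'a \<Rightarrow> 'a \<times> 'a \<Rightarrow> 'a \<times> 'a" where
  "Rest_mult mt dot x y = (case x of (e, s) \<Rightarrow> case y of (f, t) \<Rightarrow>
      (mt e (dot s f), mt e (dot s f) * s * t))"

definition Rest_D :: "'a::monoid_mult \<times> 'a \<Rightarrow> 'a \<times> 'a" where
  "Rest_D x = (fst x, fst x)"

definition psi :: "'a::monoid_mult \<times> 'a \<Rightarrow> 'a \<times> 'a" where
  "psi x = (fst x, fst x * snd x)"

end

theory Submission
  imports Defs
begin

text \<open>Since the elements of E are idempotent, psi (e, s) = (e, es) lies in Rest(E,S), and every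
  (e, s) in Rest(E,S) is its own image. Compatibility with the multiplications reduces to
  meet e (es . f) = meet e (s . f): for g in E below e we have g(es)f = g(es) iff gsf = gs, so by the
  modal law both meets bound each other and coincide because E is right pre-reduced. For
  u = meet e (s . f) the modal law also gives usf = us, which turns u(es)(ft) into ust.\<close>

context
  fixes E :: "'a::monoid_mult set" and mt dot :: "'a \<Rightarrow> 'a \<Rightarrow> 'a"
  assumes ilm: "inductive_left_E_monoid E mt dot"
begin

lemma idempotent_of_E: "e \<in> E \<Longrightarrow> e * e = e"
  using ilm by (auto simp: inductive_left_E_monoid_def idempotents_def)

lemma dot_in_E: "f \<in> E \<Longrightarrow> dot t f \<in> E"
  using ilm by (simp add: inductive_left_E_monoid_def)

lemma mult_dot_eq_iff: "f \<in> E \<Longrightarrow> u * dot t f = u \<longleftrightarrow> u * t * f = u * t"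
  using ilm by (simp add: inductive_left_E_monoid_def)

lemma meet_in_E: "e \<in> E \<Longrightarrow> f \<in> E \<Longrightarrow> mt e f \<in> E"
  using ilm by (simp add: inductive_left_E_monoid_def is_meet_on_def)

lemma meet_mult_left: "e \<in> E \<Longrightarrow> f \<in> E \<Longrightarrow> mt e f * e = mt e f"
  using ilm by (simp add: inductive_left_E_monoid_def is_meet_on_def leq_r_def)

lemma meet_mult_right: "e \<in> E \<Longrightarrow> f \<in> E \<Longrightarrow> mt e f * f = mt e f"
  using ilm by (simp add: inductive_left_E_monoid_def is_meet_on_def leq_r_def)

lemma mult_meet_eq:
  "e \<in> E \<Longrightarrow> f \<in> E \<Longrightarrow> g \<in> E \<Longrightarrow> g * e = g \<Longrightarrow> g * f = g \<Longrightarrow> g * mt e f = g"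
  using ilm unfolding inductive_left_E_monoid_def is_meet_on_def leq_r_def by metis

lemma E_antisym: "x \<in> E \<Longrightarrow> y \<in> E \<Longrightarrow> x * y = x \<Longrightarrow> y * x = y \<Longrightarrow> x = y"
  using ilm unfolding inductive_left_E_monoid_def right_pre_reduced_def by metis

lemma mult_dot_mult_left_iff:
  assumes e: "e \<in> E" and f: "f \<in> E" and g: "g \<in> E" and ge: "g * e = g"
  shows "g * dot (e * s) f = g \<longleftrightarrow> g * dot s f = g"
proof -
  have "g * (e * s) = g * s" using ge by (metis mult.assoc)
  then show ?thesis using mult_dot_eq_iff[OF f] by (metis mult.assoc)
qed

lemma meet_dot_mult_left:
  assumes e: "e \<in> E" and f: "f \<in> E"
  shows "mt e (dot (e * s) f) = mt e (dot s f)"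
proof (rule E_antisym)
  let ?x = "mt e (dot (e * s) f)" and ?y = "mt e (dot s f)"
  have xE: "?x \<in> E" and yE: "?y \<in> E" using e f by (simp_all add: meet_in_E dot_in_E)
  have xe: "?x * e = ?x" and ye: "?y * e = ?y" using e f by (simp_all add: meet_mult_left dot_in_E)
  have "?x * dot (e * s) f = ?x" using e f by (simp add: meet_mult_right dot_in_E)
  then have "?x * dot s f = ?x" using mult_dot_mult_left_iff e f xE xe by blast
  then show "?x * ?y = ?x" using e f xE xe by (simp add: mult_meet_eq dot_in_E)
  have "?y * dot s f = ?y" using e f by (simp add: meet_mult_right dot_in_E)
  then have "?y * dot (e * s) f = ?y" using mult_dot_mult_left_iff e f yE ye by blast
  then show "?y * ?x = ?y" using e f yE ye by (simp add: mult_meet_eq dot_in_E)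
qed (use e f in \<open>simp_all add: meet_in_E dot_in_E\<close>)

lemma psi_image_P_set: "psi ` P_set E = Rest_set E"
proof
  show "psi ` P_set E \<subseteq> Rest_set E"
    by (auto simp: psi_def P_set_def Rest_set_def idempotent_of_E mult.assoc[symmetric])
  show "Rest_set E \<subseteq> psi ` P_set E"
  proof
    fix z assume "z \<in> Rest_set E"
    then obtain e s where "z = (e, s)" "e \<in> E" "e * s = s" by (auto simp: Rest_set_def)
    then have "z = psi (e, s)" by (simp add: psi_def)
    with \<open>e \<in> E\<close> show "z \<in> psi ` P_set E" by (simp add: P_set_def)
  qed
qed

lemma psi_P_mult:
  assumes "x \<in> P_set E" "y \<in> P_set E"
  shows "psi (P_mult mt dot x y) = Rest_mult mt dot (psi x) (psi y)"
proof -
  obtain e s f t where xy: "x = (e, s)" "y = (f, t)" and e: "e \<in> E" and f: "f \<in> E"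
    using assms by (auto simp: P_set_def)
  let ?u = "mt e (dot s f)"
  have ue: "?u * e = ?u" using e f by (simp add: meet_mult_left dot_in_E)
  have "?u * dot s f = ?u" using e f by (simp add: meet_mult_right dot_in_E)
  then have "?u * s * f = ?u * s" using mult_dot_eq_iff[OF f] by blast
  then have "?u * (e * s) * (f * t) = ?u * s * t" using ue by (metis mult.assoc)
  then show ?thesis
    using xy meet_dot_mult_left[OF e f] by (simp add: psi_def P_mult_def Rest_mult_def mult.assoc)
qed

end

lemma psi_P_D: "psi (P_D x) = Rest_D (psi x)"
  by (simp add: psi_def P_D_def Rest_D_def)

lemma inj_on_psi_P_D_image: "inj_on psi (P_D ` A)"
  by (auto simp: inj_on_def psi_def P_D_def)

theorem proposition6p1:
  fixes E :: "'a::monoid_mult set" and mt dot :: "'a \<Rightarrow> 'a \<Rightarrow> 'a"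
  assumes "inductive_left_E_monoid E mt dot"
  shows "psi ` P_set E = Rest_set E
    \<and> (\<forall>x\<in>P_set E. \<forall>y\<in>P_set E. psi (P_mult mt dot x y) = Rest_mult mt dot (psi x) (psi y))
    \<and> (\<forall>x\<in>P_set E. psi (P_D x) = Rest_D (psi x))
    \<and> inj_on psi (P_D ` P_set E)"
  using psi_image_P_set[OF assms] psi_P_mult[OF assms] psi_P_D inj_on_psi_P_D_image by blast

end
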